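(* Let $\mathcal{N}$ be a ReLU network with widths $n_0,\dots,n_L$ and let $X=[x^{(1)},\dots,x^{(m)}]\in\mathbb{R}^{n_0\times m}$ be a fixed dataset whose $m$ columns are affinely independent. Fix an activation pattern $A$ and let $\mathbf{A}=[A,\dots,A]$ (all points assigned the pattern $A$). Let $n^A_\ell=|\{i: A^\ell_i=1\}|$. Then the image $\{F^{\mathbf{A}}_X(\theta):\theta\in\mathbb{R}^{d_{\operatorname{par}}}\}\subseteq\mathbb{R}^{n_L\times m}$ coincides with the image $\{G_X(\theta'):\theta'\}$ of the fully connected linear network $\mathcal{L}$ with widths $n_0,n_1^A,\dots,n^A_{L-1},n_L$.
   Context: A ReLU network with widths $n_0,\dots,n_L$ has parameters $\theta=(W^{(\ell)},b^{(\ell)})_{\ell=1}^L$ with $W^{(\ell)}\in\mathbb{R}^{n_\ell\times n_{\ell-1}}$, $b^{(\ell)}\in\mathbb{R}^{n_\ell}$. An activation pattern is $A=(A^1,\dots,A^{L-1})$ with $A^\ell\in\{0,1\}^{n_\ell}$. For such $A$, $f^A_\theta(x)=W^{(L)}\big(W^{(L-1)}_A(\cdots(W^{(1)}_Ax+b^{(1)}_A)\cdots)+b^{(L-1)}_A\big)+b^{(L)}$ where $W^{(\ell)}_A=\operatorname{diag}(A^\ell)W^{(\ell)}$, $b^{(\ell)}_A=\operatorname{diag}(A^\ell)b^{(\ell)}$, and $F^{\mathbf{A}}_X(\theta)=[f^A_\theta(x^{(1)}),\dots,f^A_\theta(x^{(m)})]$. The fully connected linear network with widths $k_0,\dots,k_L$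 has parameters $\theta'=(V^{(\ell)},c^{(\ell)})$, $V^{(\ell)}\in\mathbb{R}^{k_\ell\times k_{\ell-1}}$, $c^{(\ell)}\in\mathbb{R}^{k_\ell}$, and computes $h_{\theta'}(x)=V^{(L)}(\cdots(V^{(1)}x+c^{(1)})\cdots)+c^{(L)}$; $G_X(\theta')=[h_{\theta'}(x^{(1)}),\dots,h_{\theta'}(x^{(m)})]$. *)

theory Defs
  imports Main "Jordan_Normal_Form.Matrix"
begin

text \<open>Widths are given by a function n :: nat => nat (n 0, ..., n L).
  Parameters: W l i j is entry (i,j) of the weight matrix of layer l (l = 1..L),
  b l i is entry i of the bias of layer l. Only entries with i < n l and
  j < n (l-1) are ever used, so the parameter space is (up to irrelevant
  entries) R^{d_par}.  An activation pattern is A l i (l = 1..L-1, i < n l),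
  True meaning A^l_i = 1.\<close>

definition affine_layer ::
  "(nat \<Rightarrow> nat) \<Rightarrow> (nat \<Rightarrow> nat \<Rightarrow> nat \<Rightarrow> real) \<Rightarrow> (nat \<Rightarrow> nat \<Rightarrow> real)
   \<Rightarrow> nat \<Rightarrow> (nat \<Rightarrow> real) \<Rightarrow> nat \<Rightarrow> real" where
  "affine_layer n W b l z i = (\<Sum>j<n (l - 1). W l i j * z j) + b l i"

fun pattern_hidden ::
  "(nat \<Rightarrow> nat) \<Rightarrow> (nat \<Rightarrow> nat \<Rightarrow> nat \<Rightarrow> real) \<Rightarrow> (nat \<Rightarrow> nat \<Rightarrow> real)
   \<Rightarrow> (nat \<Rightarrow> nat \<Rightarrow> bool) \<Rightarrow> (nat \<Rightarrow> real) \<Rightarrow> nat \<Rightarrow> (nat \<Rightarrow> real)" where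
  "pattern_hidden n W b A x 0 = x"
| "pattern_hidden n W b A x (Suc l) =
     (\<lambda>i. if A (Suc l) i then affine_layer n W b (Suc l) (pattern_hidden n W b A x l) i else 0)"

definition pattern_net ::
  "(nat \<Rightarrow> nat) \<Rightarrow> nat \<Rightarrow> (nat \<Rightarrow> nat \<Rightarrow> nat \<Rightarrow> real) \<Rightarrow> (nat \<Rightarrow> nat \<Rightarrow> real)
   \<Rightarrow> (nat \<Rightarrow> nat \<Rightarrow> bool) \<Rightarrow> (nat \<Rightarrow> real) \<Rightarrow> nat \<Rightarrow> real" where
  "pattern_net n L W b A x = affine_layer n W b L (pattern_hidden n W b A x (L - 1))"

fun linear_hidden ::
  "(nat \<Rightarrow> nat) \<Rightarrow> (nat \<Rightarrow> nat \<Rightarrow> nat \<Rightarrow> real) \<Rightarrow> (nat \<Rightarrow> nat \<Rightarrow> real)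
   \<Rightarrow> (nat \<Rightarrow> real) \<Rightarrow> nat \<Rightarrow> (nat \<Rightarrow> real)" where
  "linear_hidden k V c x 0 = x"
| "linear_hidden k V c x (Suc l) = affine_layer k V c (Suc l) (linear_hidden k V c x l)"

definition linear_net ::
  "(nat \<Rightarrow> nat) \<Rightarrow> nat \<Rightarrow> (nat \<Rightarrow> nat \<Rightarrow> nat \<Rightarrow> real) \<Rightarrow> (nat \<Rightarrow> nat \<Rightarrow> real)
   \<Rightarrow> (nat \<Rightarrow> real) \<Rightarrow> nat \<Rightarrow> real" where
  "linear_net k L V c x = linear_hidden k V c x L"

definition pattern_output ::
  "(nat \<Rightarrow> nat) \<Rightarrow> nat \<Rightarrow> (nat \<Rightarrow> nat \<Rightarrow> nat \<Rightarrow> real) \<Rightarrow> (nat \<Rightarrow> nat \<Rightarrow> real)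
   \<Rightarrow> (nat \<Rightarrow> nat \<Rightarrow> bool) \<Rightarrow> real mat \<Rightarrow> real mat" where
  "pattern_output n L W b A X =
     mat (n L) (dim_col X) (\<lambda>(i, j). pattern_net n L W b A (\<lambda>r. X $$ (r, j)) i)"

definition linear_output ::
  "(nat \<Rightarrow> nat) \<Rightarrow> nat \<Rightarrow> (nat \<Rightarrow> nat \<Rightarrow> nat \<Rightarrow> real) \<Rightarrow> (nat \<Rightarrow> nat \<Rightarrow> real)
   \<Rightarrow> real mat \<Rightarrow> real mat" where
  "linear_output k L V c X =
     mat (k L) (dim_col X) (\<lambda>(i, j). linear_net k L V c (\<lambda>r. X $$ (r, j)) i)"

definition affinely_independent_cols :: "real mat \<Rightarrow> bool" where
  "affinely_independent_cols X \<longleftrightarrow>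
     (\<forall>a :: nat \<Rightarrow> real.
        (\<Sum>j<dim_col X. a j) = 0 \<and>
        (\<forall>r<dim_row X. (\<Sum>j<dim_col X. a j * X $$ (r, j)) = 0)
        \<longrightarrow> (\<forall>j<dim_col X. a j = 0))"

definition pattern_widths :: "(nat \<Rightarrow> nat) \<Rightarrow> nat \<Rightarrow> (nat \<Rightarrow> nat \<Rightarrow> bool) \<Rightarrow> nat \<Rightarrow> nat" where
  "pattern_widths n L A l =
     (if l = 0 \<or> l = L then n l else card {i. i < n l \<and> A l i})"

end

theory Submission
  imports Defs
begin

text \<open>When every data point carries the same pattern A, the network computes the affine map
  in which each inactive hidden neuron outputs 0. Such a neuron contributes nothing to the
  next layer, so deleting it (its row of W and b, and its column of the next W) gives a fully
  connected linear network of widths n_0, n^A_1, ..., n^A_{L-1}, n_L computing the same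
  function; conversely the weights of any such linear network can be placed on the active
  neurons.\<close>

definition kept_neurons :: "(nat \<Rightarrow> nat) \<Rightarrow> nat \<Rightarrow> (nat \<Rightarrow> nat \<Rightarrow> bool) \<Rightarrow> nat \<Rightarrow> nat set" where
  "kept_neurons n L A l = (if l = 0 \<or> l = L then {..<n l} else {i. i < n l \<and> A l i})"

lemma kept_neurons_subset: "kept_neurons n L A l \<subseteq> {..<n l}"
  by (auto simp: kept_neurons_def)

lemma card_kept_neurons: "card (kept_neurons n L A l) = pattern_widths n L A l"
  by (simp add: kept_neurons_def pattern_widths_def)

lemma ex_kept_neurons_enumeration:
  "\<exists>e. (\<forall>l. bij_betw (e l) {..<pattern_widths n L A l} (kept_neurons n L A l))
       \<and> (\<forall>i. e 0 i = i) \<and> (\<forall>i. e L i = i)"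
proof -
  have "\<forall>l. \<exists>f. bij_betw f {..<pattern_widths n L A l} (kept_neurons n L A l)"
  proof
    fix l
    have "finite (kept_neurons n L A l)"
      using kept_neurons_subset by (rule finite_subset) simp
    from ex_bij_betw_nat_finite[OF this]
    show "\<exists>f. bij_betw f {..<pattern_widths n L A l} (kept_neurons n L A l)"
      by (simp add: card_kept_neurons atLeast0LessThan)
  qed
  then obtain f where f: "\<And>l. bij_betw (f l) {..<pattern_widths n L A l} (kept_neurons n L A l)"
    by metis
  define e where "e l = (if l = 0 \<or> l = L then id else f l)" for l
  have "bij_betw (e l) {..<pattern_widths n L A l} (kept_neurons n L A l)" for l
    using f[of l] by (auto simp: e_def pattern_widths_def kept_neurons_def)
  then show ?thesis
    by (intro exI[of _ e]) (simp add: e_def)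
qed

lemma pattern_hidden_outside_kept:
  assumes "l < L" "j < n l" "j \<notin> kept_neurons n L A l"
  shows "pattern_hidden n W b A x l j = 0"
proof -
  obtain l' where "l = Suc l'" "\<not> A l j"
    using assms by (cases l) (auto simp: kept_neurons_def)
  then show ?thesis by simp
qed

lemma affine_layer_cong:
  "(\<And>j. j < n (l - 1) \<Longrightarrow> z j = z' j) \<Longrightarrow> affine_layer n W b l z i = affine_layer n W b l z' i"
  by (simp add: affine_layer_def)

lemma affine_layer_reindex:
  assumes bij: "bij_betw f {..<k (l - 1)} S" and S: "S \<subseteq> {..<n (l - 1)}"
    and vanish: "\<And>j. j < n (l - 1) \<Longrightarrow> j \<notin> S \<Longrightarrow> z j = 0"
    and V: "\<And>j. j < k (l - 1) \<Longrightarrow> V l i j = W l i' (f j)" and c: "c l i = b l i'"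
  shows "affine_layer k V c l (\<lambda>j. z (f j)) i = affine_layer n W b l z i'"
proof -
  have "(\<Sum>j<k (l - 1). V l i j * z (f j)) = (\<Sum>j<k (l - 1). W l i' (f j) * z (f j))"
    using V by simp
  also have "\<dots> = (\<Sum>j\<in>S. W l i' j * z j)"
    using sum.reindex_bij_betw[OF bij, of "\<lambda>j. W l i' j * z j"] by simp
  also have "\<dots> = (\<Sum>j<n (l - 1). W l i' j * z j)"
    using S vanish by (intro sum.mono_neutral_left) auto
  finally show ?thesis
    by (simp add: affine_layer_def c)
qed

context
  fixes n :: "nat \<Rightarrow> nat" and L :: nat and A :: "nat \<Rightarrow> nat \<Rightarrow> bool"
    and e :: "nat \<Rightarrow> nat \<Rightarrow> nat"
    and V W :: "nat \<Rightarrow> nat \<Rightarrow> nat \<Rightarrow> real" and c b :: "nat \<Rightarrow> nat \<Rightarrow> real"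
  assumes bij: "\<And>l. bij_betw (e l) {..<pattern_widths n L A l} (kept_neurons n L A l)"
    and e0: "\<And>i. e 0 i = i" and eL: "\<And>i. e L i = i"
    and V: "\<And>l i j. 1 \<le> l \<Longrightarrow> l \<le> L \<Longrightarrow> i < pattern_widths n L A l \<Longrightarrow>
              j < pattern_widths n L A (l - 1) \<Longrightarrow> V l i j = W l (e l i) (e (l - 1) j)"
    and c: "\<And>l i. 1 \<le> l \<Longrightarrow> l \<le> L \<Longrightarrow> i < pattern_widths n L A l \<Longrightarrow> c l i = b l (e l i)"
begin

lemma affine_layer_pruned:
  assumes "Suc l \<le> L" "i < pattern_widths n L A (Suc l)"
  shows "affine_layer (pattern_widths n L A) V c (Suc l) (\<lambda>j. pattern_hidden n W b A x l (e l j)) i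
       = affine_layer n W b (Suc l) (pattern_hidden n W b A x l) (e (Suc l) i)"
proof (rule affine_layer_reindex)
  show "bij_betw (e l) {..<pattern_widths n L A (Suc l - 1)} (kept_neurons n L A l)"
    using bij by simp
qed (use assms kept_neurons_subset pattern_hidden_outside_kept[of l L] V[of "Suc l"] c in auto)

lemma linear_hidden_eq_pattern_hidden:
  "l < L \<Longrightarrow> j < pattern_widths n L A l \<Longrightarrow>
   linear_hidden (pattern_widths n L A) V c x l j = pattern_hidden n W b A x l (e l j)"
proof (induction l arbitrary: j)
  case 0
  then show ?case by (simp add: e0)
next
  case (Suc l)
  have "e (Suc l) j \<in> kept_neurons n L A (Suc l)"
    using bij[of "Suc l"] Suc.prems by (auto simp: bij_betw_def)
  then have active: "A (Suc l) (e (Suc l) j)"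
    using Suc.prems by (auto simp: kept_neurons_def)
  have "linear_hidden (pattern_widths n L A) V c x (Suc l) j
      = affine_layer (pattern_widths n L A) V c (Suc l) (\<lambda>j. pattern_hidden n W b A x l (e l j)) j"
    using Suc by (auto intro: affine_layer_cong)
  also have "\<dots> = pattern_hidden n W b A x (Suc l) (e (Suc l) j)"
    using affine_layer_pruned Suc.prems active by simp
  finally show ?case .
qed

lemma linear_net_eq_pattern_net:
  assumes "L \<ge> 1" "i < n L"
  shows "linear_net (pattern_widths n L A) L V c x i = pattern_net n L W b A x i"
proof -
  obtain l where L: "L = Suc l" using assms(1) by (cases L) auto
  have "linear_net (pattern_widths n L A) L V c x i
      = affine_layer (pattern_widths n L A) V c (Suc l) (linear_hidden (pattern_widths n L A) V c x l) i"
    by (simp add: linear_net_def L)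
  also have "\<dots> = affine_layer (pattern_widths n L A) V c (Suc l) (\<lambda>j. pattern_hidden n W b A x l (e l j)) i"
    using linear_hidden_eq_pattern_hidden[of l] \<open>L = Suc l\<close> by (intro affine_layer_cong) simp
  also have "\<dots> = pattern_net n L W b A x i"
    using affine_layer_pruned[of l i x] assms(2) eL by (simp add: L pattern_net_def pattern_widths_def)
  finally show ?thesis .
qed

end

lemma pattern_output_eq_linear_output:
  assumes "k L = n L" and "\<And>x i. i < n L \<Longrightarrow> linear_net k L V c x i = pattern_net n L W b A x i"
  shows "pattern_output n L W b A X = linear_output k L V c X"
  unfolding pattern_output_def linear_output_def by (rule eq_matI) (simp_all add: assms)

theorem lemma2p3:
  fixes n :: "nat \<Rightarrow> nat" and L :: nat and X :: "real mat"
    and A :: "nat \<Rightarrow> nat \<Rightarrow> bool"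
  assumes "L \<ge> 1"
    and "dim_row X = n 0"
    and "affinely_independent_cols X"
  shows "{pattern_output n L W b A X | W b. True}
       = {linear_output (pattern_widths n L A) L V c X | V c. True}"
proof -
  let ?k = "pattern_widths n L A"
  obtain e where bij: "\<And>l. bij_betw (e l) {..<?k l} (kept_neurons n L A l)"
    and e0: "\<And>i. e 0 i = i" and eL: "\<And>i. e L i = i"
    using ex_kept_neurons_enumeration by metis
  note same_output = pattern_output_eq_linear_output[OF _ linear_net_eq_pattern_net[OF bij e0 eL _ _ assms(1)]]
  have kL: "?k L = n L" by (simp add: pattern_widths_def)
  show ?thesis
  proof (intro equalityI subsetI)
    fix M assume "M \<in> {pattern_output n L W b A X | W b. True}"
    then obtain W b where "M = pattern_output n L W b A X" by auto
    moreover have "\<dots> = linear_output ?k L (\<lambda>l i j. W l (e l i) (e (l - 1) j)) (\<lambda>l i. b l (e l i)) X"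
      by (rule same_output) (simp_all add: kL)
    ultimately show "M \<in> {linear_output ?k L V c X | V c. True}" by blast
  next
    fix M assume "M \<in> {linear_output ?k L V c X | V c. True}"
    then obtain V c where "M = linear_output ?k L V c X" by auto
    define g where "g l = the_inv_into {..<?k l} (e l)" for l
    have g: "g l (e l i) = i" if "i < ?k l" for l i
      unfolding g_def using bij[of l] that by (auto simp: bij_betw_def the_inv_into_f_f)
    have "pattern_output n L (\<lambda>l i j. V l (g l i) (g (l - 1) j)) (\<lambda>l i. c l (g l i)) A X = M"
      unfolding \<open>M = _\<close> by (rule same_output) (simp_all add: kL g)
    then show "M \<in> {pattern_output n L W b A X | W b. True}" by blast
  qed
qed

end
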